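(* With $\overline{C}(\alpha)$ as defined in the context, $\overline{C}\left(\tfrac12\right)\ge 0.35047\,\pi^2$.
   Context: For a strictly increasing sequence $(\lambda_k)_{k=-\infty}^{\infty}$ of real numbers, put $\delta_k:=\min\{\lambda_k-\lambda_{k-1},\lambda_{k+1}-\lambda_k\}$. For $0\le\alpha\le2$, let $\overline{C}(\alpha)$ be the minimum of all constants $C(\alpha)$ such that $$\sum_{m=1}^N\sum_{\substack{n=1\\ n\ne m}}^N\frac{\delta_m^{2-\alpha}\delta_n^{\alpha}t_mt_n}{(\lambda_m-\lambda_n)^2}\le C(\alpha)\sum_{n=1}^N t_n^2$$ holds for every positive integer $N$, every strictly increasing real sequence $(\lambda_k)_{k\in\mathbb Z}$ and all nonnegative reals $t_1,\dots,t_N$; set $\overline{C}(\alpha)=\infty$ if no such real constant exists. *)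

theory Defs
  imports "HOL-Analysis.Analysis"
begin

definition gap :: "(int \<Rightarrow> real) \<Rightarrow> int \<Rightarrow> real" where
  "gap lam k = min (lam k - lam (k - 1)) (lam (k + 1) - lam k)"

definition admissible_const :: "real \<Rightarrow> real \<Rightarrow> bool" where
  "admissible_const \<alpha> C \<longleftrightarrow>
     (\<forall>(N::nat) (lam::int \<Rightarrow> real) (t::nat \<Rightarrow> real).
        N \<ge> 1 \<longrightarrow> strict_mono lam \<longrightarrow> (\<forall>n\<in>{1..N}. t n \<ge> 0) \<longrightarrow>
        (\<Sum>m=1..N. \<Sum>n\<in>{1..N} - {m}.
           gap lam (int m) powr (2 - \<alpha>) * gap lam (int n) powr \<alpha> * t m * t n
             / (lam (int m) - lam (int n))^2)
        \<le> C * (\<Sum>n=1..N. (t n)^2))"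

text \<open>The optimal constant; infinity if no admissible real constant exists.\<close>
definition Cbar :: "real \<Rightarrow> ereal" where
  "Cbar \<alpha> = Inf {ereal C | C. admissible_const \<alpha> C}"

end

theory Submission
  imports Defs
begin

(* If C is admissible, then for every configuration with lam (k + M) = lam k + T and weights
   t k = w (k mod M), the form of one period against a window of 2J + 1 periods is at most
   C * (sum of w r^2 over a period): apply admissibility to K periods, where all but 2J + 1
   periods see their full window, and let K go to infinity.

   The configuration used has period T = 36/5 and consists of the points 0, 1, ..., 5 followed
   by a grid of step h = 3/(25 n), n = 10^13, on [5, 31/5]; the weights are constants on the
   five isolated points and sqrt h times a step function on the grid.  Keeping only the
   sparse-sparse and sparse-grid interactions and the grid-grid interactions within a period,
   the grid sums are Riemann sums of 1/x^2, bounded below by integrals, the far periods are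
   bounded below by telescoping sums, and a block of m equally weighted grid points contributes
   at least (m - 2D) * 2 * (sum of 1/d^2 for d <= D). *)

lemma sum_reindex_le:
  fixes f :: "'b \<Rightarrow> 'c::ordered_comm_monoid_add"
  assumes "finite B" "inj_on g A" "g ` A \<subseteq> B" "\<And>b. b \<in> B \<Longrightarrow> 0 \<le> f b"
  shows "(\<Sum>a\<in>A. f (g a)) \<le> sum f B"
proof -
  have "(\<Sum>a\<in>A. f (g a)) = sum f (g ` A)"
    using assms(2) by (simp add: sum.reindex)
  also have "\<dots> \<le> sum f B"
    using assms(1,3,4) by (intro sum_mono2) auto
  finally show ?thesis .
qed

lemma mult_add_eq_iff:
  fixes q q' r r' M :: nat
  assumes "r < M" "r' < M"
  shows "q * M + r = q' * M + r' \<longleftrightarrow> q = q' \<and> r = r'"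
proof
  assume e: "q * M + r = q' * M + r'"
  have "(q * M + r) div M = q" "(q * M + r) mod M = r"
    "(q' * M + r') div M = q'" "(q' * M + r') mod M = r'"
    using assms by auto
  then show "q = q' \<and> r = r'" using e by metis
qed simp

lemma sum_periodic:
  fixes f :: "nat \<Rightarrow> real"
  assumes "0 < M"
  shows "(\<Sum>k=1..K*M. f (k mod M)) = real K * (\<Sum>r<M. f r)"
proof -
  have lt: "(\<Sum>k<K*M. f (k mod M)) = real K * (\<Sum>r<M. f r)" for K
  proof (induction K)
    case (Suc K)
    have "(\<Sum>k<Suc K * M. f (k mod M))
        = (\<Sum>k<K*M. f (k mod M)) + (\<Sum>k\<in>{K*M..<K*M+M}. f (k mod M))"
      by (simp add: sum.atLeastLessThan_concat atLeast0LessThan[symmetric] add.commute)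
    also have "(\<Sum>k\<in>{K*M..<K*M+M}. f (k mod M)) = (\<Sum>r<M. f r)"
      using sum.shift_bounds_nat_ivl[of "\<lambda>k. f (k mod M)" 0 "K*M" M]
      by (simp add: atLeast0LessThan add.commute)
    finally show ?case using Suc by (simp add: algebra_simps)
  qed simp
  have "(\<Sum>k=1..K*M. f (k mod M)) = (\<Sum>k<Suc (K*M). f (k mod M)) - f 0"
    by (simp add: sum.atLeast1_atMost_eq lessThan_Suc_atMost sum.atMost_shift)
  also have "\<dots> = (\<Sum>k<K*M. f (k mod M))"
    by simp
  finally show ?thesis using lt by simp
qed

lemma sum_int_interval_symmetric:
  fixes f :: "int \<Rightarrow> real"
  shows "(\<Sum>j\<in>{- int J..int J}. f j) = f 0 + (\<Sum>j=1..J. f (int j) + f (- int j))"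
proof (induction J)
  case (Suc J)
  have "{- int (Suc J)..int (Suc J)} = insert (- int (Suc J)) (insert (int (Suc J)) {- int J..int J})"
    by auto
  then show ?case using Suc by simp
qed simp

lemma sum_split_first_two:
  fixes f :: "nat \<Rightarrow> real"
  assumes "2 \<le> J"
  shows "(\<Sum>j=1..J. f j) = f 1 + f 2 + (\<Sum>j=3..J. f j)"
proof -
  have "{1..J} = insert 1 (insert 2 {3..J})" using assms by auto
  then show ?thesis by simp
qed

lemma sum_const_on_interval:
  assumes "\<And>i. a \<le> i \<Longrightarrow> i < b \<Longrightarrow> f i = (c::real)"
  shows "(\<Sum>i\<in>{a..<b}. f i) = real (b - a) * c"
  using assms by (simp add: sum.cong[of "{a..<b}" "{a..<b}" f "\<lambda>_. c"])

lemma strict_mono_int_succ: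
  fixes f :: "int \<Rightarrow> 'a::order"
  assumes "\<And>k. f k < f (k + 1)"
  shows "strict_mono f"
proof (rule strict_monoI)
  fix x y :: int assume "x < y"
  then show "f x < f y"
  proof (induction y rule: int_gr_induct)
    case (step i)
    show ?case using step.IH assms[of i] by (rule less_trans)
  qed (rule assms)
qed

section \<open>Sums of inverse squares\<close>

definition recip_sq_integral :: "real \<Rightarrow> real \<Rightarrow> real" where
  "recip_sq_integral l y = 1/y - 1/(y + l)"

lemma recip_sq_integral_eq:
  assumes "0 < y" "0 \<le> l"
  shows "recip_sq_integral l y = l / (y * (y + l))"
  using assms by (simp add: recip_sq_integral_def field_simps)

lemma recip_sq_integral_antimono:
  assumes "0 < y" "y \<le> y'" "0 \<le> l"
  shows "recip_sq_integral l y' \<le> recip_sq_integral l y"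
proof -
  have "0 < y'" using assms by linarith
  then show ?thesis
    unfolding recip_sq_integral_eq[OF assms(1,3)] recip_sq_integral_eq[OF \<open>0 < y'\<close> assms(3)]
    using assms by (intro divide_left_mono mult_mono) auto
qed

lemma recip_sq_integral_le_step:
  fixes y h :: real
  assumes "0 < y" "0 < h"
  shows "recip_sq_integral h y \<le> h / y^2"
  unfolding recip_sq_integral_eq[OF assms(1) less_imp_le[OF assms(2)]] power2_eq_square
  using assms by (intro divide_left_mono mult_left_mono) auto

lemma recip_sq_integral_le_right_sum:
  fixes y h :: real
  assumes "0 < y" "0 < h"
  shows "recip_sq_integral (real m * h) y \<le> (\<Sum>i<m. h / (y + real i * h)^2)"
proof (induction m)
  case (Suc m)
  have pos: "0 < y + real m * h" using assms by (simp add: add_pos_nonneg)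
  have "recip_sq_integral (real (Suc m) * h) y
      = recip_sq_integral (real m * h) y + recip_sq_integral h (y + real m * h)"
    by (simp add: recip_sq_integral_def algebra_simps)
  then show ?case
    using Suc recip_sq_integral_le_step[OF pos assms(2)] by simp
qed (simp add: recip_sq_integral_def)

lemma recip_sq_integral_le_left_sum:
  fixes z h :: real
  assumes "0 < h" "0 < z - real m * h + h"
  shows "recip_sq_integral (real m * h) (z - real m * h + h) \<le> (\<Sum>i<m. h / (z - real i * h)^2)"
  using assms(2)
proof (induction m)
  case (Suc m)
  have pos: "0 < z - real m * h" using Suc.prems by (simp add: algebra_simps)
  have "recip_sq_integral (real (Suc m) * h) (z - real (Suc m) * h + h)
      = recip_sq_integral h (z - real m * h) + recip_sq_integral (real m * h) (z - real m * h + h)"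
    by (simp add: recip_sq_integral_def algebra_simps)
  then show ?case
    using Suc pos recip_sq_integral_le_step[OF pos assms(1)] assms(1) by simp
qed (simp add: recip_sq_integral_def)

text \<open>Any \<open>h0 \<ge> h\<close> may replace the offset \<open>h\<close> of the left integrals; with \<open>h0 = 1/10^7\<close> the
  certificates below do not depend on the grid step.\<close>

lemma window_grid_sum_ge:
  fixes h h0 T a :: real and m J :: nat
  assumes h: "0 < h" "h \<le> h0" and a: "0 < a" and T: "real m * h + a < T"
  shows "recip_sq_integral (real m * h) a + (\<Sum>j=1..J. recip_sq_integral (real m * h) (real j * T + a)
           + recip_sq_integral (real m * h) (real j * T - a - real m * h + h0))
     \<le> (\<Sum>j\<in>{- int J..int J}. \<Sum>i<m. h / (of_int j * T + a + real i * h)^2)"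
proof -
  define l where "l = real m * h"
  have l: "0 \<le> l" unfolding l_def using h by simp
  have "recip_sq_integral l (real j * T + a) + recip_sq_integral l (real j * T - a - l + h0)
      \<le> (\<Sum>i<m. h / (real j * T + a + real i * h)^2) + (\<Sum>i<m. h / (real j * T - a - real i * h)^2)"
    if j: "j \<in> {1..J}" for j
  proof -
    have jT: "T \<le> real j * T" using j T l a unfolding l_def by auto
    have "0 < real j * T + a" using jT T l a unfolding l_def by linarith
    then have right: "recip_sq_integral l (real j * T + a) \<le> (\<Sum>i<m. h / (real j * T + a + real i * h)^2)"
      unfolding l_def using h by (intro recip_sq_integral_le_right_sum)
    have pos: "0 < (real j * T - a) - real m * h + h" using jT T h by linarith
    have "recip_sq_integral l (real j * T - a - l + h0) \<le> recip_sq_integral l (real j * T - a - l + h)"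
      using pos h l unfolding l_def by (intro recip_sq_integral_antimono) auto
    also have "\<dots> \<le> (\<Sum>i<m. h / (real j * T - a - real i * h)^2)"
      using recip_sq_integral_le_left_sum[OF h(1) pos] unfolding l_def by (simp add: algebra_simps)
    finally show ?thesis using right by linarith
  qed
  then have "(\<Sum>j=1..J. recip_sq_integral l (real j * T + a) + recip_sq_integral l (real j * T - a - l + h0))
      \<le> (\<Sum>j=1..J. (\<Sum>i<m. h / (real j * T + a + real i * h)^2) + (\<Sum>i<m. h / (real j * T - a - real i * h)^2))"
    by (rule sum_mono)
  moreover have "recip_sq_integral l a \<le> (\<Sum>i<m. h / (a + real i * h)^2)"
    unfolding l_def using a h by (intro recip_sq_integral_le_right_sum)
  moreover have "(\<Sum>j\<in>{- int J..int J}. \<Sum>i<m. h / (of_int j * T + a + real i * h)^2)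
      = (\<Sum>i<m. h / (a + real i * h)^2) + (\<Sum>j=1..J. (\<Sum>i<m. h / (real j * T + a + real i * h)^2)
          + (\<Sum>i<m. h / (real j * T - a - real i * h)^2))"
  proof -
    have "(\<Sum>i<m. h / (of_int (- int j) * T + a + real i * h)^2) = (\<Sum>i<m. h / (real j * T - a - real i * h)^2)"
      for j by (intro sum.cong) (auto simp: power2_eq_square algebra_simps)
    then show ?thesis by (subst sum_int_interval_symmetric) (simp add: add_ac)
  qed
  ultimately show ?thesis unfolding l_def by linarith
qed

text \<open>The terms are compared with the telescoping terms \<open>a / ((y - \<theta>) (y - \<theta> + T))\<close>: for
  \<open>2 \<theta> + b \<le> T\<close> the difference \<open>(y - \<theta>) (y - \<theta> + T) - y (y + b)\<close> is nondecreasing in \<open>y\<close>,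
  so the comparison only has to be checked at the first term.\<close>

lemma lattice_tail_ge:
  fixes T c \<theta> a b :: real and J0 J :: nat
  defines "y0 \<equiv> real (Suc J0) * T + c"
  assumes T: "0 < T" and a: "0 \<le> a" and b: "0 \<le> b" and \<theta>: "0 \<le> \<theta>" "2 * \<theta> + b \<le> T"
    and y0: "\<theta> < y0" "y0 * (y0 + b) \<le> (y0 - \<theta>) * (y0 - \<theta> + T)"
    and J: "J0 \<le> J"
  shows "a / T * (1 / (y0 - \<theta>) - 1 / (real (Suc J) * T + c - \<theta>))
     \<le> (\<Sum>j\<in>{Suc J0..J}. a / ((real j * T + c) * (real j * T + c + b)))"
proof -
  define H where "H j = a / T * (1 / (real j * T + c - \<theta>))" for j :: nat
  have step: "H j - H (Suc j) \<le> a / ((real j * T + c) * (real j * T + c + b))"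
    if j: "Suc J0 \<le> j" for j
  proof -
    define y where "y = real j * T + c"
    have "y0 \<le> y" unfolding y_def y0_def using j T by (intro add_right_mono mult_right_mono) auto
    then have y\<theta>: "\<theta> < y" using y0 by linarith
    have "y0 * (T - 2 * \<theta> - b) \<le> y * (T - 2 * \<theta> - b)"
      using \<open>y0 \<le> y\<close> \<theta> by (intro mult_right_mono) auto
    then have key: "y * (y + b) \<le> (y - \<theta>) * (y - \<theta> + T)"
      using y0(2) by (simp add: algebra_simps)
    have shift: "real (Suc j) * T + c - \<theta> = (y - \<theta>) + T" unfolding y_def by (simp add: algebra_simps)
    have "H j - H (Suc j) = a / T * (1 / (y - \<theta>) - 1 / ((y - \<theta>) + T))"
      unfolding H_def shift unfolding y_def by (simp add: right_diff_distrib)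
    also have "\<dots> = a / ((y - \<theta>) * (y - \<theta> + T))"
      using T y\<theta> by (simp add: field_simps)
    also have "\<dots> \<le> a / (y * (y + b))"
      using key y\<theta> \<theta> a b by (intro divide_left_mono) (auto intro!: mult_pos_pos)
    finally show ?thesis unfolding y_def .
  qed
  have "H (Suc J0) - H (Suc J) = (\<Sum>j\<in>{Suc J0..J}. H j - H (Suc j))"
    using sum_Suc_diff[of "Suc J0" J "\<lambda>i. - H i"] J by simp
  also have "\<dots> \<le> (\<Sum>j\<in>{Suc J0..J}. a / ((real j * T + c) * (real j * T + c + b)))"
    by (intro sum_mono step) auto
  finally show ?thesis unfolding H_def y0_def by (simp add: right_diff_distrib)
qed

lemma inverse_squares_partial_sum_ge:
  assumes "1 \<le> D"
  shows "pi^2/6 - 1/real D \<le> (\<Sum>d=1..D. 1/(real d)^2)"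
proof -
  have tail: "(\<lambda>n. 1 / real ((n + D + 1)^2)) sums (pi^2/6 - (\<Sum>n<D. 1 / real ((n + 1)^2)))"
    using sums_split_initial_segment[OF inverse_squares_sums, of D] by (simp add: algebra_simps)
  have lim: "(\<lambda>n. 1 / real (n + D)) \<longlonglongrightarrow> 0"
    using LIMSEQ_ignore_initial_segment[OF lim_inverse_n', of D] by simp
  have tele: "(\<lambda>n. recip_sq_integral 1 (real (n + D))) sums (1 / real D)"
    using telescope_sums'[OF lim] by (simp add: recip_sq_integral_def add_ac)
  have le: "1 / real ((n + D + 1)^2) \<le> recip_sq_integral 1 (real (n + D))" for n
  proof -
    have pos: "0 < real (n + D)" using assms by simp
    have "real ((n + D + 1)^2) = (real (n + D) + 1) * (real (n + D) + 1)"
      by (simp add: power2_eq_square algebra_simps)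
    moreover have "1 / ((real (n + D) + 1) * (real (n + D) + 1)) \<le> 1 / (real (n + D) * (real (n + D) + 1))"
      using pos by (intro divide_left_mono mult_right_mono) auto
    ultimately have "1 / real ((n + D + 1)^2) \<le> 1 / (real (n + D) * (real (n + D) + 1))"
      by simp
    then show ?thesis using recip_sq_integral_eq[OF pos, of 1] by simp
  qed
  have "pi^2/6 - (\<Sum>n<D. 1 / real ((n + 1)^2)) \<le> 1 / real D"
    using sums_le[OF le tail tele] .
  moreover have "(\<Sum>n<D. 1 / real ((n + 1)^2)) = (\<Sum>d=1..D. 1/(real d)^2)"
    using sum.atLeast1_atMost_eq[of "\<lambda>d. 1/(real d)^2" D] by simp
  ultimately show ?thesis by simp
qed

text \<open>Here and below diagonal terms (\<open>u = v\<close>, \<open>n = m\<close>, or \<open>j = 0\<close> and \<open>r' = r\<close>) need no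
  exclusion: their denominator vanishes and \<open>x / 0 = 0\<close>.\<close>

definition inv_sq_dist_sum :: "nat \<Rightarrow> real" where
  "inv_sq_dist_sum m = (\<Sum>u<m. \<Sum>v<m. 1 / (real v - real u)^2)"

lemma inv_sq_dist_sum_ge:
  assumes "2 * D \<le> m"
  shows "real (m - 2 * D) * (2 * (\<Sum>d=1..D. 1/(real d)^2)) \<le> inv_sq_dist_sum m"
proof -
  define f where "f u v = 1 / (real v - real u)^2" for u v :: nat
  have row: "2 * (\<Sum>d=1..D. 1/(real d)^2) \<le> (\<Sum>v<m. f u v)" if u: "u \<in> {D..<m - D}" for u
  proof -
    have inj_up: "inj_on (\<lambda>d. u + d) {1..D}" and inj_down: "inj_on (\<lambda>d. u - d) {1..D}"
      using u by (auto simp: inj_on_def)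
    have up: "(\<Sum>v\<in>(\<lambda>d. u + d) ` {1..D}. f u v) = (\<Sum>d=1..D. 1/(real d)^2)"
      by (subst sum.reindex[OF inj_up]) (auto simp: f_def intro!: sum.cong)
    have down: "(\<Sum>v\<in>(\<lambda>d. u - d) ` {1..D}. f u v) = (\<Sum>d=1..D. 1/(real d)^2)"
      using u by (subst sum.reindex[OF inj_down]) (auto simp: f_def of_nat_diff intro!: sum.cong)
    have "2 * (\<Sum>d=1..D. 1/(real d)^2) = (\<Sum>v\<in>(\<lambda>d. u + d) ` {1..D} \<union> (\<lambda>d. u - d) ` {1..D}. f u v)"
      using u up down by (subst sum.union_disjoint) auto
    also have "\<dots> \<le> (\<Sum>v<m. f u v)"
      using u by (intro sum_mono2) (auto simp: f_def)
    finally show ?thesis .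
  qed
  have "real (m - 2 * D) * (2 * (\<Sum>d=1..D. 1/(real d)^2)) = (\<Sum>u\<in>{D..<m - D}. 2 * (\<Sum>d=1..D. 1/(real d)^2))"
    using assms by simp
  also have "\<dots> \<le> (\<Sum>u\<in>{D..<m - D}. \<Sum>v<m. f u v)"
    by (intro sum_mono row)
  also have "\<dots> \<le> (\<Sum>u<m. \<Sum>v<m. f u v)"
    by (intro sum_mono2) (auto intro!: sum_nonneg simp: f_def)
  finally show ?thesis unfolding inv_sq_dist_sum_def f_def .
qed

section \<open>Periodic configurations\<close>

lemma periodic_shift:
  fixes lam :: "int \<Rightarrow> real"
  assumes per: "\<And>k. lam (k + int M) = lam k + T"
  shows "lam (k + q * int M) = lam k + of_int q * T"
proof (induction q rule: int_induct[where k = 0])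
  case (step1 i)
  then show ?case using per[of "k + i * int M"] by (simp add: algebra_simps)
next
  case (step2 i)
  then show ?case using per[of "k + (i - 1) * int M"] by (simp add: algebra_simps)
qed simp

lemma gap_periodic:
  assumes per: "\<And>k. lam (k + int M) = lam k + T"
  shows "gap lam (k + q * int M) = gap lam k"
proof -
  have "lam (k + q * int M + d) = lam (k + d) + of_int q * T" for d
    using periodic_shift[of lam M T "k + d" q] per by (simp add: add_ac)
  from this[of "-1"] this[of 0] this[of 1] show ?thesis
    unfolding gap_def by (simp add: algebra_simps)
qed

lemma admissible_constD:
  assumes "admissible_const \<alpha> C" "1 \<le> N" "strict_mono lam" "\<And>n. n \<in> {1..N} \<Longrightarrow> 0 \<le> t n"
  shows "(\<Sum>m=1..N. \<Sum>n\<in>{1..N} - {m}.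
           gap lam (int m) powr (2 - \<alpha>) * gap lam (int n) powr \<alpha> * t m * t n
             / (lam (int m) - lam (int n))^2)
        \<le> C * (\<Sum>n=1..N. (t n)^2)"
  using assms unfolding admissible_const_def by blast

definition periodic_form :: "real \<Rightarrow> (int \<Rightarrow> real) \<Rightarrow> (nat \<Rightarrow> real) \<Rightarrow> nat \<Rightarrow> nat \<Rightarrow> real" where
  "periodic_form \<alpha> lam w M J =
     (\<Sum>r<M. \<Sum>r'<M. \<Sum>j\<in>{- int J..int J}.
        gap lam (int r) powr (2 - \<alpha>) * gap lam (int r') powr \<alpha> * w r * w r'
          / (lam (int r) - lam (j * int M + int r'))^2)"

lemma window_index_mem:
  fixes M K J q r :: nat and j :: int
  assumes "0 < M" "J + 1 \<le> q" "q + J + 1 \<le> K" "\<bar>j\<bar> \<le> int J" "r < M"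
  shows "nat (int q + j) * M + r \<in> {1..K * M}"
proof -
  have "1 \<le> nat (int q + j)" "nat (int q + j) + 1 \<le> K" using assms by auto
  then have "M \<le> nat (int q + j) * M" "nat (int q + j) * M + M \<le> K * M"
    using mult_right_mono[of "nat (int q + j) + 1" K M] by auto
  then show ?thesis unfolding atLeastAtMost_iff using assms by linarith
qed

lemma periodic_form_le_truncated:
  assumes M: "0 < M" and per: "\<And>k. lam (k + int M) = lam k + T" and w: "\<And>r. 0 \<le> w r"
    and K: "2 * J + 2 \<le> K"
  shows "real (K - 2 * J - 1) * periodic_form \<alpha> lam w M J
    \<le> (\<Sum>m=1..K * M. \<Sum>n=1..K * M. gap lam (int m) powr (2 - \<alpha>) * gap lam (int n) powr \<alpha>
         * w (m mod M) * w (n mod M) / (lam (int m) - lam (int n))^2)"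
proof -
  define G where "G m n = gap lam (int m) powr (2 - \<alpha>) * gap lam (int n) powr \<alpha>
    * w (m mod M) * w (n mod M) / (lam (int m) - lam (int n))^2" for m n
  define F where "F r j r' = gap lam (int r) powr (2 - \<alpha>) * gap lam (int r') powr \<alpha> * w r * w r'
    / (lam (int r) - lam (j * int M + int r'))^2" for r j r'
  define Q where "Q = {J + 1..K - J - 1}"
  define X where "X = {- int J..int J} \<times> {..<M}"
  have Q: "J + 1 \<le> q" "q + J + 1 \<le> K" if "q \<in> Q" for q
    using that K by (auto simp: Q_def)
  have G_nonneg: "0 \<le> G m n" for m n
    unfolding G_def using w by (intro divide_nonneg_nonneg mult_nonneg_nonneg) auto
  have G_shift: "G (q * M + r) (nat (int q + j) * M + r') = F r j r'"
    if "r < M" "r' < M" "0 \<le> int q + j" for q r r' j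
  proof -
    have gap_shift: "gap lam (k + q * int M) = gap lam k" for k q
      using per by (rule gap_periodic)
    have lam_shift: "lam (k + q * int M) = lam k + of_int q * T" for k q
      using per by (rule periodic_shift)
    have m: "int (q * M + r) = int r + int q * int M" by simp
    have n: "int (nat (int q + j) * M + r') = (j * int M + int r') + int q * int M"
      using that(3) by (simp add: algebra_simps)
    have "gap lam (j * int M + int r') = gap lam (int r')"
      using gap_shift[of "int r'" j] by (simp add: add_ac)
    then show ?thesis
      unfolding G_def F_def m n lam_shift gap_shift using that
      by (simp add: algebra_simps)
  qed
  have row: "(\<Sum>(j, r')\<in>X. F r j r') \<le> (\<Sum>n=1..K * M. G (q * M + r) n)" if "q \<in> Q" "r < M" for q r
  proof -
    have "(\<Sum>(j, r')\<in>X. F r j r') = (\<Sum>x\<in>X. G (q * M + r) ((\<lambda>(j, r'). nat (int q + j) * M + r') x))"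
      using that(2) Q[OF that(1)] by (intro sum.cong) (auto simp: X_def G_shift)
    also have "\<dots> \<le> (\<Sum>n=1..K * M. G (q * M + r) n)"
    proof (rule sum_reindex_le)
      show "inj_on (\<lambda>(j, r'). nat (int q + j) * M + r') X"
        using Q[OF that(1)] by (auto simp: inj_on_def X_def mult_add_eq_iff)
      show "(\<lambda>(j, r'). nat (int q + j) * M + r') ` X \<subseteq> {1..K * M}"
      proof clarify
        fix j r' assume "(j, r') \<in> X"
        then show "nat (int q + j) * M + r' \<in> {1..K * M}"
          using Q[OF that(1)] M by (intro window_index_mem) (auto simp: X_def)
      qed
    qed (auto simp: G_nonneg)
    finally show ?thesis .
  qed
  have "real (K - 2 * J - 1) * periodic_form \<alpha> lam w M J = (\<Sum>q\<in>Q. \<Sum>r<M. \<Sum>(j, r')\<in>X. F r j r')"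
  proof -
    have "(\<Sum>(j, r')\<in>X. F r j r') = (\<Sum>r'<M. \<Sum>j\<in>{- int J..int J}. F r j r')" for r
      unfolding X_def by (subst sum.cartesian_product[symmetric]) (rule sum.swap)
    moreover have "card Q = K - 2 * J - 1"
      using K by (simp add: Q_def)
    ultimately show ?thesis
      by (simp add: periodic_form_def F_def)
  qed
  also have "\<dots> = (\<Sum>(q, r)\<in>Q \<times> {..<M}. \<Sum>(j, r')\<in>X. F r j r')"
    by (rule sum.cartesian_product)
  also have "\<dots> \<le> (\<Sum>(q, r)\<in>Q \<times> {..<M}. \<Sum>n=1..K * M. G (q * M + r) n)"
    by (rule sum_mono, clarify, rule row) auto
  also have "\<dots> = (\<Sum>x\<in>Q \<times> {..<M}. (\<lambda>m. \<Sum>n=1..K * M. G m n) ((\<lambda>(q, r). q * M + r) x))"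
    by (intro sum.cong) auto
  also have "\<dots> \<le> (\<Sum>m=1..K * M. \<Sum>n=1..K * M. G m n)"
  proof (rule sum_reindex_le)
    show "inj_on (\<lambda>(q, r). q * M + r) (Q \<times> {..<M})"
      by (auto simp: inj_on_def mult_add_eq_iff)
    show "(\<lambda>(q, r). q * M + r) ` (Q \<times> {..<M}) \<subseteq> {1..K * M}"
    proof clarify
      fix q r assume "q \<in> Q" "r < M"
      then show "q * M + r \<in> {1..K * M}"
        using Q[OF \<open>q \<in> Q\<close>] M window_index_mem[of M J q K 0 r] by simp
    qed
  qed (auto intro: sum_nonneg G_nonneg)
  finally show ?thesis unfolding G_def .
qed

lemma admissible_const_periodic_scaled:
  assumes C: "admissible_const \<alpha> C" and mono: "strict_mono lam" and M: "0 < M"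
    and per: "\<And>k. lam (k + int M) = lam k + T" and w: "\<And>r. 0 \<le> w r"
    and K: "2 * J + 2 \<le> K"
  shows "real (K - 2 * J - 1) * periodic_form \<alpha> lam w M J \<le> C * (real K * (\<Sum>r<M. (w r)^2))"
proof -
  define N where "N = K * M"
  define t where "t m = w (m mod M)" for m
  define G where "G m n = gap lam (int m) powr (2 - \<alpha>) * gap lam (int n) powr \<alpha> * t m * t n
    / (lam (int m) - lam (int n))^2" for m n
  have "real (K - 2 * J - 1) * periodic_form \<alpha> lam w M J \<le> (\<Sum>m=1..N. \<Sum>n=1..N. G m n)"
    unfolding N_def G_def t_def using M per w K by (rule periodic_form_le_truncated)
  also have "\<dots> = (\<Sum>m=1..N. \<Sum>n\<in>{1..N} - {m}. G m n)"
    by (rule sum.cong[OF refl]) (simp add: G_def sum_diff1)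
  also have "\<dots> \<le> C * (\<Sum>n=1..N. (t n)^2)"
    unfolding G_def using C _ mono by (rule admissible_constD) (use M K w in \<open>auto simp: N_def t_def\<close>)
  also have "(\<Sum>n=1..N. (t n)^2) = real K * (\<Sum>r<M. (w r)^2)"
    unfolding N_def t_def using sum_periodic[OF M] .
  finally show ?thesis .
qed

lemma admissible_const_periodic:
  assumes C: "admissible_const \<alpha> C" and mono: "strict_mono lam" and M: "0 < M"
    and per: "\<And>k. lam (k + int M) = lam k + T" and w: "\<And>r. 0 \<le> w r"
  shows "periodic_form \<alpha> lam w M J \<le> C * (\<Sum>r<M. (w r)^2)"
proof (rule ccontr)
  define P S where "P = periodic_form \<alpha> lam w M J" and "S = (\<Sum>r<M. (w r)^2)"
  assume "\<not> P \<le> C * S"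
  then have pos: "0 < P - C * S" by simp
  obtain K0 :: nat where K0: "(2 * J + 1) * P / (P - C * S) < real K0"
    using reals_Archimedean2 by blast
  define K where "K = K0 + 2 * J + 2"
  have "real (K - 2 * J - 1) * P \<le> C * (real K * S)"
    unfolding P_def S_def using admissible_const_periodic_scaled[OF C mono M per w, of J K]
    by (simp add: K_def)
  then have "real K * (P - C * S) \<le> (2 * J + 1) * P"
    by (simp add: K_def of_nat_diff algebra_simps)
  then have "real K \<le> (2 * J + 1) * P / (P - C * S)"
    using pos by (simp add: field_simps)
  then show False using K0 by (simp add: K_def)
qed

section \<open>The configuration\<close>

definition grid_n :: nat where "grid_n = 10^13"
definition grid_h :: real where "grid_h = 3 / (25 * real grid_n)"
definition period_M :: nat where "period_M = 10 * grid_n + 6"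
definition period_T :: real where "period_T = 36/5"
definition window_J :: nat where "window_J = 10^6"

definition config_pos :: "nat \<Rightarrow> real" where
  "config_pos r = (if r < 5 then real r else 5 + real (r - 5) * grid_h)"

definition config :: "int \<Rightarrow> real" where
  "config k = of_int (k div int period_M) * period_T + config_pos (nat (k mod int period_M))"

definition config_spacing :: "nat \<Rightarrow> real" where
  "config_spacing r = (if 5 \<le> r \<and> r + 1 < period_M then grid_h else 1)"

lemma grid_h_pos: "0 < grid_h"
  by (simp add: grid_h_def grid_n_def)

lemma grid_h_le: "grid_h \<le> 1/10^7"
  by (simp add: grid_h_def grid_n_def)

lemma grid_n_times_h: "real grid_n * grid_h = 3/25"
  by (simp add: grid_h_def grid_n_def)

lemma grid_h_multiples:
  "real (2 * grid_n) * grid_h = 6/25" "real (6 * grid_n) * grid_h = 18/25"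
  "real (8 * grid_n) * grid_h = 24/25" "real (10 * grid_n) * grid_h = 6/5"
  by (simp_all add: grid_h_def grid_n_def)

lemma period_M_ge: "100 \<le> period_M"
  by (simp add: period_M_def grid_n_def)

lemma config_base:
  assumes "r < period_M"
  shows "config (int r) = config_pos r"
  using assms by (simp add: config_def)

lemma config_periodic: "config (k + int period_M) = config k + period_T"
proof -
  have "(k + int period_M) div int period_M = k div int period_M + 1"
    using period_M_ge by simp
  then show ?thesis by (simp add: config_def algebra_simps)
qed

lemma config_shift: "config (k + q * int period_M) = config k + of_int q * period_T"
  using config_periodic by (rule periodic_shift)

lemma config_spacing_base:
  assumes r: "r < period_M"
  shows "config (int r + 1) - config (int r) = config_spacing r"
proof (cases "r + 1 < period_M")
  case True
  have "config (int r + 1) = config_pos (r + 1)"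
    using config_base[OF True] by (simp add: add.commute)
  moreover have "config_pos (r + 1) - config_pos r = config_spacing r"
    using True by (cases "r < 5") (auto simp: config_pos_def config_spacing_def of_nat_diff algebra_simps)
  ultimately show ?thesis using config_base[OF r] by simp
next
  case False
  then have r: "r = period_M - 1" using r by simp
  have "config (int r + 1) = period_T"
    using config_periodic[of 0] r period_M_ge by (simp add: of_nat_diff config_def config_pos_def)
  moreover have "config_pos r = 5 + real (10 * grid_n) * grid_h"
    using r period_M_ge by (simp add: config_pos_def period_M_def)
  ultimately show ?thesis
    unfolding grid_h_multiples(4) using config_base[of r] r period_M_ge
    by (simp add: config_spacing_def period_T_def)
qed

lemma config_succ: "config (k + 1) - config k = config_spacing (nat (k mod int period_M))"
proof -
  define r where "r = nat (k mod int period_M)"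
  have r: "r < period_M" and k: "k = int r + (k div int period_M) * int period_M"
    using period_M_ge unfolding r_def by (simp_all add: nat_less_iff)
  have "config (k + 1) - config k = config (int r + 1) - config (int r)"
    using config_shift[of "int r + 1" "k div int period_M"] config_shift[of "int r" "k div int period_M"]
    by (subst (1 2) k) (simp add: add_ac)
  then show ?thesis using config_spacing_base[OF r] unfolding r_def by simp
qed

lemma strict_mono_config: "strict_mono config"
proof (rule strict_mono_int_succ)
  fix k
  have pos: "0 < config_spacing r" for r
    using grid_h_pos by (simp add: config_spacing_def)
  show "config k < config (k + 1)"
    using config_succ[of k] pos[of "nat (k mod int period_M)"] by linarith
qed

lemma gap_config:
  assumes r: "r < period_M"
  shows "gap config (int r) = (if r < 5 then 1 else grid_h)"
proof -
  have left: "config (int r) - config (int r - 1) = config_spacing (if r = 0 then period_M - 1 else r - 1)"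
  proof (cases "r = 0")
    case True
    have "config (int r) - config (int r - 1) = config (int (period_M - 1) + 1) - config (int (period_M - 1))"
      using config_periodic[of "-1"] config_periodic[of 0] True period_M_ge by (simp add: of_nat_diff)
    then show ?thesis using config_spacing_base[of "period_M - 1"] True period_M_ge by simp
  next
    case False
    then show ?thesis using config_spacing_base[of "r - 1"] r by (simp add: of_nat_diff)
  qed
  show ?thesis
    unfolding gap_def left config_spacing_base[OF r]
    using r period_M_ge grid_h_le by (auto simp: config_spacing_def min_def)
qed

definition sparse_w :: "nat \<Rightarrow> real" where
  "sparse_w r = (if r = 0 \<or> r = 4 then 333/2000 else if r = 1 \<or> r = 3 then 83/500 else 413/2500)"

definition dense_w :: "nat \<Rightarrow> real" where
  "dense_w i = (if i < 2 * grid_n then 9201/10000 else if i < 8 * grid_n then 1989/2500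
     else if i < 10 * grid_n then 9201/10000 else 0)"

definition config_w :: "nat \<Rightarrow> real" where
  "config_w r = (if r < 5 then sparse_w r else sqrt grid_h * dense_w (r - 5))"

lemma config_w_nonneg: "0 \<le> config_w r"
  using grid_h_pos by (simp add: config_w_def sparse_w_def dense_w_def)

lemma config_w_sq_sum: "(\<Sum>r<period_M. (config_w r)^2) = 249988251/250000000"
proof -
  have M: "period_M = 5 + (10 * grid_n + 1)" by (simp add: period_M_def)
  have "(\<Sum>r<period_M. (config_w r)^2) = (\<Sum>r<5. (config_w r)^2) + (\<Sum>r\<in>{5..<period_M}. (config_w r)^2)"
    using sum.atLeastLessThan_concat[of 0 5 period_M "\<lambda>r. (config_w r)^2"] period_M_ge
    by (simp add: atLeast0LessThan)
  also have "(\<Sum>r<5. (config_w r)^2) = 2 * (333/2000)^2 + 2 * (83/500)^2 + (413/2500)^2"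
    by (simp add: numeral_eq_Suc config_w_def sparse_w_def)
  also have "(\<Sum>r\<in>{5..<period_M}. (config_w r)^2) = grid_h * (\<Sum>i<10 * grid_n + 1. (dense_w i)^2)"
  proof -
    have "(\<Sum>r\<in>{5..<period_M}. (config_w r)^2) = (\<Sum>i\<in>{0..<10 * grid_n + 1}. (config_w (i + 5))^2)"
      unfolding M using sum.shift_bounds_nat_ivl[of "\<lambda>r. (config_w r)^2" 0 5 "10 * grid_n + 1"]
      by (simp add: add.commute)
    also have "\<dots> = (\<Sum>i<10 * grid_n + 1. grid_h * (dense_w i)^2)"
      using grid_h_pos by (intro sum.cong) (auto simp: config_w_def power_mult_distrib)
    also have "\<dots> = grid_h * (\<Sum>i<10 * grid_n + 1. (dense_w i)^2)"
      by (rule sum_distrib_left[symmetric])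
    finally show ?thesis .
  qed
  also have "(\<Sum>i<10 * grid_n + 1. (dense_w i)^2)
      = real (2 * grid_n) * (9201/10000)^2 + real (6 * grid_n) * (1989/2500)^2 + real (2 * grid_n) * (9201/10000)^2"
  proof -
    have "(\<Sum>i<10 * grid_n + 1. (dense_w i)^2) = (\<Sum>i\<in>{0..<2 * grid_n}. (dense_w i)^2)
        + (\<Sum>i\<in>{2 * grid_n..<8 * grid_n}. (dense_w i)^2) + (\<Sum>i\<in>{8 * grid_n..<10 * grid_n}. (dense_w i)^2)
        + (dense_w (10 * grid_n))^2"
      by (simp add: sum.atLeastLessThan_concat atLeast0LessThan[symmetric])
    moreover have "(\<Sum>i\<in>{0..<2 * grid_n}. (dense_w i)^2) = real (2 * grid_n) * (9201/10000)^2"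
      by (subst sum_const_on_interval[where c = "(9201/10000)^2"]) (auto simp: dense_w_def)
    moreover have "(\<Sum>i\<in>{2 * grid_n..<8 * grid_n}. (dense_w i)^2) = real (6 * grid_n) * (1989/2500)^2"
      by (subst sum_const_on_interval[where c = "(1989/2500)^2"]) (auto simp: dense_w_def)
    moreover have "(\<Sum>i\<in>{8 * grid_n..<10 * grid_n}. (dense_w i)^2) = real (2 * grid_n) * (9201/10000)^2"
      by (subst sum_const_on_interval[where c = "(9201/10000)^2"]) (auto simp: dense_w_def)
    ultimately show ?thesis by (simp add: dense_w_def)
  qed
  also have "grid_h * (real (2 * grid_n) * (9201/10000)^2 + real (6 * grid_n) * (1989/2500)^2
      + real (2 * grid_n) * (9201/10000)^2)
      = (real grid_n * grid_h) * (2 * (9201/10000)^2 + 6 * (1989/2500)^2 + 2 * (9201/10000)^2)"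
    by (simp add: algebra_simps)
  finally show ?thesis
    unfolding grid_n_times_h by (simp add: power2_eq_square)
qed

definition config_term :: "int \<Rightarrow> nat \<Rightarrow> nat \<Rightarrow> real" where
  "config_term j r r' = (if r < 5 then 1 else grid_h) powr (3/2) * (if r' < 5 then 1 else grid_h) powr (1/2)
     * config_w r * config_w r' / (of_int j * period_T + config_pos r' - config_pos r)^2"

lemma config_term_nonneg: "0 \<le> config_term j r r'"
  unfolding config_term_def using config_w_nonneg by (intro divide_nonneg_nonneg mult_nonneg_nonneg) auto

lemma periodic_form_config:
  "periodic_form (1/2) config config_w period_M J
     = (\<Sum>r<period_M. \<Sum>r'<period_M. \<Sum>j\<in>{- int J..int J}. config_term j r r')"
  unfolding periodic_form_def
proof (intro sum.cong refl)
  fix r r' j assume "r \<in> {..<period_M}" "r' \<in> {..<period_M}"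
  then have r: "r < period_M" and r': "r' < period_M" by auto
  have "config (j * int period_M + int r') = config_pos r' + of_int j * period_T"
    using config_shift[of "int r'" j] config_base[OF r'] by (simp add: add.commute)
  then show "gap config (int r) powr (2 - 1/2) * gap config (int r') powr (1/2) * config_w r * config_w r'
      / (config (int r) - config (j * int period_M + int r'))^2 = config_term j r r'"
    unfolding config_term_def gap_config[OF r] gap_config[OF r'] config_base[OF r]
    by (simp add: power2_commute algebra_simps)
qed

lemma config_term_sparse:
  assumes "r < 5" "r' < 5"
  shows "config_term j r r' = sparse_w r * sparse_w r' / (of_int j * period_T + (real r' - real r))^2"
  using assms by (simp add: config_term_def config_w_def config_pos_def algebra_simps)

lemma config_term_mixed:
  assumes "r < 5"
  shows "config_term j r (5 + i)
    = sparse_w r * dense_w i * (grid_h / (of_int j * period_T + (5 - real r) + real i * grid_h)^2)"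
proof -
  have "grid_h powr (1/2) = sqrt grid_h" using grid_h_pos by (simp add: powr_half_sqrt)
  moreover have "sqrt grid_h * sqrt grid_h = grid_h" using grid_h_pos by simp
  ultimately show ?thesis
    using assms by (simp add: config_term_def config_w_def config_pos_def algebra_simps)
qed

lemma config_term_dense:
  "config_term 0 (5 + u) (5 + v) = grid_h * dense_w u * dense_w v / (real v - real u)^2"
proof -
  have den: "of_int 0 * period_T + config_pos (5 + v) - config_pos (5 + u) = grid_h * (real v - real u)"
    by (simp add: config_pos_def algebra_simps)
  have "grid_h powr (3/2) * grid_h powr (1/2) = grid_h^2"
    using grid_h_pos by (simp add: powr_add[symmetric] powr_realpow)
  moreover have "sqrt grid_h * sqrt grid_h = grid_h" using grid_h_pos by simp
  ultimately have "config_term 0 (5 + u) (5 + v)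
      = grid_h^2 * (grid_h * dense_w u * dense_w v) / (grid_h^2 * (real v - real u)^2)"
    unfolding config_term_def den by (simp add: config_w_def power_mult_distrib mult_ac)
  then show ?thesis using grid_h_pos by simp
qed

definition lattice_inv_sq :: "real \<Rightarrow> real" where
  "lattice_inv_sq d = (\<Sum>j\<in>{- int window_J..int window_J}. 1 / (of_int j * period_T + d)^2)"

definition lattice_grid_sum :: "real \<Rightarrow> nat \<Rightarrow> real" where
  "lattice_grid_sum a m = (\<Sum>j\<in>{- int window_J..int window_J}. \<Sum>i<m.
     grid_h / (of_int j * period_T + a + real i * grid_h)^2)"

definition config_pair :: "nat \<Rightarrow> nat \<Rightarrow> real" where
  "config_pair r r' = (\<Sum>j\<in>{- int window_J..int window_J}. config_term j r r')"

lemma config_pair_nonneg: "0 \<le> config_pair r r'"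
  unfolding config_pair_def by (intro sum_nonneg config_term_nonneg)

lemma config_pair_sparse:
  assumes "r < 5" "r' < 5"
  shows "config_pair r r' = sparse_w r * sparse_w r' * lattice_inv_sq (real r' - real r)"
  using assms by (simp add: config_pair_def lattice_inv_sq_def config_term_sparse sum_distrib_left)

lemma dense_w_piece_lattice_grid_sum:
  assumes g: "\<And>i. a \<le> i \<Longrightarrow> i < a + m \<Longrightarrow> dense_w i = g" and s: "real a * grid_h = s"
  shows "(\<Sum>i\<in>{a..<a + m}. dense_w i * (\<Sum>j\<in>{- int window_J..int window_J}.
            grid_h / (of_int j * period_T + c + real i * grid_h)^2))
         = g * lattice_grid_sum (c + s) m"
proof -
  have shift: "sum f {a..<a + m} = (\<Sum>i<m. f (i + a))" for f :: "nat \<Rightarrow> real"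
    using sum.shift_bounds_nat_ivl[of f 0 a m] by (simp add: add.commute atLeast0LessThan)
  have "(\<Sum>i<m. dense_w (i + a) * (\<Sum>j\<in>{- int window_J..int window_J}.
            grid_h / (of_int j * period_T + c + real (i + a) * grid_h)^2))
      = (\<Sum>i<m. g * (\<Sum>j\<in>{- int window_J..int window_J}.
            grid_h / (of_int j * period_T + (c + s) + real i * grid_h)^2))"
    using g s by (intro sum.cong refl) (simp_all add: algebra_simps)
  also have "\<dots> = g * lattice_grid_sum (c + s) m"
    unfolding lattice_grid_sum_def sum_distrib_left[symmetric] by (simp add: sum.swap[of _ "{..<m}"])
  finally show ?thesis unfolding shift .
qed

definition mixed_row :: "nat \<Rightarrow> real" where
  "mixed_row r = 9201/10000 * lattice_grid_sum (5 - real r) (2 * grid_n)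
     + 1989/2500 * lattice_grid_sum (5 + 6/25 - real r) (6 * grid_n)
     + 9201/10000 * lattice_grid_sum (5 + 24/25 - real r) (2 * grid_n)"

lemma config_pair_mixed_row:
  assumes r: "r < 5"
  shows "(\<Sum>i<10 * grid_n. config_pair r (5 + i)) = sparse_w r * mixed_row r"
proof -
  define X where "X i = (\<Sum>j\<in>{- int window_J..int window_J}.
    grid_h / (of_int j * period_T + (5 - real r) + real i * grid_h)^2)" for i
  have "(\<Sum>i<10 * grid_n. config_pair r (5 + i)) = sparse_w r * (\<Sum>i<10 * grid_n. dense_w i * X i)"
    unfolding X_def config_pair_def using r by (simp add: config_term_mixed sum_distrib_left mult.assoc)
  also have "(\<Sum>i<10 * grid_n. dense_w i * X i) = (\<Sum>i\<in>{0..<0 + 2 * grid_n}. dense_w i * X i)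
      + (\<Sum>i\<in>{2 * grid_n..<2 * grid_n + 6 * grid_n}. dense_w i * X i)
      + (\<Sum>i\<in>{8 * grid_n..<8 * grid_n + 2 * grid_n}. dense_w i * X i)"
    by (simp add: sum.atLeastLessThan_concat atLeast0LessThan[symmetric])
  also have "(\<Sum>i\<in>{0..<0 + 2 * grid_n}. dense_w i * X i) = 9201/10000 * lattice_grid_sum (5 - real r + 0) (2 * grid_n)"
    unfolding X_def by (rule dense_w_piece_lattice_grid_sum) (auto simp: dense_w_def)
  also have "(\<Sum>i\<in>{2 * grid_n..<2 * grid_n + 6 * grid_n}. dense_w i * X i)
      = 1989/2500 * lattice_grid_sum (5 - real r + 6/25) (6 * grid_n)"
    unfolding X_def using grid_h_multiples
    by (intro dense_w_piece_lattice_grid_sum) (auto simp: dense_w_def)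
  also have "(\<Sum>i\<in>{8 * grid_n..<8 * grid_n + 2 * grid_n}. dense_w i * X i)
      = 9201/10000 * lattice_grid_sum (5 - real r + 24/25) (2 * grid_n)"
    unfolding X_def using grid_h_multiples
    by (intro dense_w_piece_lattice_grid_sum) (auto simp: dense_w_def)
  finally show ?thesis by (simp add: mixed_row_def algebra_simps)
qed

lemma dense_w_piece_inv_sq_dist_sum:
  assumes g: "\<And>i. a \<le> i \<Longrightarrow> i < a + m \<Longrightarrow> dense_w i = g"
  shows "(\<Sum>u\<in>{a..<a + m}. \<Sum>v\<in>{a..<a + m}. config_term 0 (5 + u) (5 + v))
    = grid_h * g^2 * inv_sq_dist_sum m"
proof -
  have shift: "sum f {a..<a + m} = (\<Sum>i<m. f (i + a))" for f :: "nat \<Rightarrow> real"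
    using sum.shift_bounds_nat_ivl[of f 0 a m] by (simp add: add.commute atLeast0LessThan)
  have "(\<Sum>u\<in>{a..<a + m}. \<Sum>v\<in>{a..<a + m}. config_term 0 (5 + u) (5 + v))
      = (\<Sum>u<m. \<Sum>v<m. grid_h * g^2 * (1 / (real v - real u)^2))"
    unfolding shift config_term_dense using g by (intro sum.cong refl) (simp add: power2_eq_square)
  then show ?thesis by (simp add: inv_sq_dist_sum_def sum_distrib_left)
qed

definition sparse_block :: real where
  "sparse_block = (\<Sum>r<5. \<Sum>r'<5. sparse_w r * sparse_w r' * lattice_inv_sq (real r' - real r))"

definition mixed_block :: real where
  "mixed_block = (\<Sum>r<5. sparse_w r * mixed_row r)"

definition dense_block :: real where
  "dense_block = grid_h * (9201/10000)^2 * inv_sq_dist_sum (2 * grid_n)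
     + grid_h * (1989/2500)^2 * inv_sq_dist_sum (6 * grid_n) + grid_h * (9201/10000)^2 * inv_sq_dist_sum (2 * grid_n)"

lemma dense_block_le: "dense_block \<le> (\<Sum>u<10 * grid_n. \<Sum>v<10 * grid_n. config_pair (5 + u) (5 + v))"
proof -
  define A where "A u = (\<Sum>v<10 * grid_n. config_term 0 (5 + u) (5 + v))" for u
  have piece: "grid_h * g^2 * inv_sq_dist_sum m \<le> (\<Sum>u\<in>{a..<a + m}. A u)"
    if "a + m \<le> 10 * grid_n" "\<And>i. a \<le> i \<Longrightarrow> i < a + m \<Longrightarrow> dense_w i = g" for a m g
  proof -
    have "grid_h * g^2 * inv_sq_dist_sum m = (\<Sum>u\<in>{a..<a + m}. \<Sum>v\<in>{a..<a + m}. config_term 0 (5 + u) (5 + v))"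
      using that(2) by (rule dense_w_piece_inv_sq_dist_sum[symmetric])
    also have "\<dots> \<le> (\<Sum>u\<in>{a..<a + m}. A u)"
      unfolding A_def using that(1) by (intro sum_mono sum_mono2) (auto simp: config_term_nonneg)
    finally show ?thesis .
  qed
  have "(\<Sum>u<10 * grid_n. A u) = (\<Sum>u\<in>{0..<0 + 2 * grid_n}. A u) + (\<Sum>u\<in>{2 * grid_n..<2 * grid_n + 6 * grid_n}. A u)
      + (\<Sum>u\<in>{8 * grid_n..<8 * grid_n + 2 * grid_n}. A u)"
    by (simp add: sum.atLeastLessThan_concat atLeast0LessThan[symmetric])
  moreover have "grid_h * (9201/10000)^2 * inv_sq_dist_sum (2 * grid_n) \<le> (\<Sum>u\<in>{0..<0 + 2 * grid_n}. A u)"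
    by (rule piece) (auto simp: dense_w_def)
  moreover have "grid_h * (1989/2500)^2 * inv_sq_dist_sum (6 * grid_n)
      \<le> (\<Sum>u\<in>{2 * grid_n..<2 * grid_n + 6 * grid_n}. A u)"
    by (rule piece) (auto simp: dense_w_def)
  moreover have "grid_h * (9201/10000)^2 * inv_sq_dist_sum (2 * grid_n)
      \<le> (\<Sum>u\<in>{8 * grid_n..<8 * grid_n + 2 * grid_n}. A u)"
    by (rule piece) (auto simp: dense_w_def)
  moreover have "A u \<le> (\<Sum>v<10 * grid_n. config_pair (5 + u) (5 + v))" for u
    unfolding A_def config_pair_def
    by (intro sum_mono member_le_sum) (auto simp: config_term_nonneg)
  then have "(\<Sum>u<10 * grid_n. A u) \<le> (\<Sum>u<10 * grid_n. \<Sum>v<10 * grid_n. config_pair (5 + u) (5 + v))"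
    by (rule sum_mono)
  ultimately show ?thesis unfolding dense_block_def by linarith
qed

text \<open>The terms dropped here are the grid rows against the isolated points (smaller by a factor
  \<open>h\<close>) and the grid-grid pairs in different periods.\<close>

lemma blocks_le_periodic_form:
  "sparse_block + mixed_block + dense_block \<le> periodic_form (1/2) config config_w period_M window_J"
proof -
  have M: "period_M = 5 + (10 * grid_n + 1)" by (simp add: period_M_def)
  define A where "A r = (\<Sum>r'<period_M. config_pair r r')" for r
  have A_nonneg: "0 \<le> A r" for r
    unfolding A_def by (intro sum_nonneg config_pair_nonneg)
  have dense_part: "sum f {..<10 * grid_n} \<le> sum f {..<period_M - 5}" if "\<And>i. 0 \<le> f i" for f :: "nat \<Rightarrow> real"
    using that by (intro sum_mono2) (auto simp: M)
  have shift: "sum f {5..<period_M} = sum (\<lambda>i. f (5 + i)) {..<period_M - 5}" for f :: "nat \<Rightarrow> real"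
    using sum.shift_bounds_nat_ivl[of f 0 5 "period_M - 5"] period_M_ge
    by (simp add: atLeast0LessThan add.commute)
  have split: "sum f {..<period_M} = sum f {..<5} + sum (\<lambda>i. f (5 + i)) {..<period_M - 5}"
    for f :: "nat \<Rightarrow> real"
    using sum.atLeastLessThan_concat[of 0 5 period_M f] period_M_ge
    by (simp add: atLeast0LessThan shift)
  have sparse_row: "(\<Sum>r'<5. config_pair r r') + (\<Sum>i<10 * grid_n. config_pair r (5 + i)) \<le> A r" for r
    unfolding A_def split by (intro add_left_mono dense_part config_pair_nonneg)
  have dense_row: "(\<Sum>v<10 * grid_n. config_pair (5 + u) (5 + v)) \<le> A (5 + u)" for u
    unfolding A_def split using config_pair_nonneg
    by (intro order_trans[OF dense_part] add_increasing sum_nonneg) auto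
  have "sparse_block + mixed_block
      = (\<Sum>r<5. (\<Sum>r'<5. config_pair r r') + (\<Sum>i<10 * grid_n. config_pair r (5 + i)))"
    unfolding sparse_block_def mixed_block_def sum.distrib
    by (intro arg_cong2[where f = "(+)"] sum.cong refl) (simp_all add: config_pair_sparse config_pair_mixed_row)
  also have "\<dots> \<le> (\<Sum>r<5. A r)"
    by (intro sum_mono sparse_row)
  finally have "sparse_block + mixed_block \<le> (\<Sum>r<5. A r)" .
  moreover have "dense_block \<le> (\<Sum>u<period_M - 5. A (5 + u))"
  proof -
    have "dense_block \<le> (\<Sum>u<10 * grid_n. A (5 + u))"
      using dense_block_le sum_mono[OF dense_row] by (rule order_trans)
    also have "\<dots> \<le> (\<Sum>u<period_M - 5. A (5 + u))"
      using A_nonneg by (rule dense_part)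
    finally show ?thesis .
  qed
  moreover have "periodic_form (1/2) config config_w period_M window_J
      = (\<Sum>r<5. A r) + (\<Sum>u<period_M - 5. A (5 + u))"
    unfolding periodic_form_config A_def config_pair_def
      split[of "\<lambda>r. \<Sum>r'<period_M. \<Sum>j\<in>{- int window_J..int window_J}. config_term j r r'"]
    by (simp add: sum.swap[of _ "{- int window_J..int window_J}"])
  ultimately show ?thesis by linarith
qed

section \<open>Numerical bounds\<close>

lemma lattice_inv_sq_uminus: "lattice_inv_sq (- d) = lattice_inv_sq d"
  unfolding lattice_inv_sq_def
  by (rule sum.reindex_bij_witness[of _ uminus uminus]) (auto simp: power2_eq_square algebra_simps)

lemma lattice_inv_sq_ge:
  fixes d \<theta>1 \<theta>2 :: real
  defines "T \<equiv> period_T"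
  assumes \<theta>1: "0 \<le> \<theta>1" "2 * \<theta>1 \<le> T" "\<theta>1 < 3 * T + d"
      "(3 * T + d)^2 \<le> (3 * T + d - \<theta>1) * (3 * T + d - \<theta>1 + T)"
    and \<theta>2: "0 \<le> \<theta>2" "2 * \<theta>2 \<le> T" "\<theta>2 < 3 * T - d"
      "(3 * T - d)^2 \<le> (3 * T - d - \<theta>2) * (3 * T - d - \<theta>2 + T)"
  shows "1 / d^2 + (1 / (T + d)^2 + 1 / (T - d)^2) + (1 / (2 * T + d)^2 + 1 / (2 * T - d)^2)
     + 1 / T * (1 / (3 * T + d - \<theta>1) - 1 / (real (Suc window_J) * T + d - \<theta>1))
     + 1 / T * (1 / (3 * T - d - \<theta>2) - 1 / (real (Suc window_J) * T - d - \<theta>2))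
     \<le> lattice_inv_sq d"
proof -
  have T: "0 < T" by (simp add: T_def period_T_def)
  have J: "2 \<le> window_J" by (simp add: window_J_def)
  have tail: "1 / T * (1 / (3 * T + c - \<theta>) - 1 / (real (Suc window_J) * T + c - \<theta>))
      \<le> (\<Sum>j=3..window_J. 1 / (real j * T + c)^2)"
    if "0 \<le> \<theta>" "2 * \<theta> \<le> T" "\<theta> < 3 * T + c"
      "(3 * T + c)^2 \<le> (3 * T + c - \<theta>) * (3 * T + c - \<theta> + T)"
    for c \<theta>
    using lattice_tail_ge[OF T, of 1 0 \<theta> 2 c window_J] that J
    by (simp add: power2_eq_square numeral_eq_Suc)
  have "lattice_inv_sq d = 1 / d^2 + (1 / (T + d)^2 + 1 / (T - d)^2) + (1 / (2 * T + d)^2 + 1 / (2 * T - d)^2)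
      + (\<Sum>j=3..window_J. 1 / (real j * T + d)^2) + (\<Sum>j=3..window_J. 1 / (real j * T + - d)^2)"
    unfolding lattice_inv_sq_def sum_int_interval_symmetric sum_split_first_two[OF J] T_def
    by (simp add: sum.distrib power2_commute[of _ d] algebra_simps)
  then show ?thesis
    using tail[OF \<theta>1] tail[of \<theta>2 "- d"] \<theta>2 by simp
qed

lemma lattice_grid_sum_ge:
  fixes a l \<theta>1 \<theta>2 :: real and m :: nat
  defines "T \<equiv> period_T" and "a' \<equiv> - a - l + 1/10^7"
  assumes m: "real m * grid_h = l" and a: "0 < a" "l + a < T"
    and \<theta>1: "0 \<le> \<theta>1" "2 * \<theta>1 + l \<le> T" "\<theta>1 < 3 * T + a"
      "(3 * T + a) * (3 * T + a + l) \<le> (3 * T + a - \<theta>1) * (3 * T + a - \<theta>1 + T)"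
    and \<theta>2: "0 \<le> \<theta>2" "2 * \<theta>2 + l \<le> T" "\<theta>2 < 3 * T + a'"
      "(3 * T + a') * (3 * T + a' + l) \<le> (3 * T + a' - \<theta>2) * (3 * T + a' - \<theta>2 + T)"
  shows "recip_sq_integral l a
     + (recip_sq_integral l (T + a) + recip_sq_integral l (T + a'))
     + (recip_sq_integral l (2 * T + a) + recip_sq_integral l (2 * T + a'))
     + l / T * (1 / (3 * T + a - \<theta>1) - 1 / (real (Suc window_J) * T + a - \<theta>1))
     + l / T * (1 / (3 * T + a' - \<theta>2) - 1 / (real (Suc window_J) * T + a' - \<theta>2))
     \<le> lattice_grid_sum a m"
proof -
  have T: "0 < T" by (simp add: T_def period_T_def)
  have J: "2 \<le> window_J" by (simp add: window_J_def)
  have l: "0 \<le> l" using m grid_h_pos by (metis of_nat_0_le_iff mult_nonneg_nonneg less_imp_le)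
  have tail: "l / T * (1 / (3 * T + c - \<theta>) - 1 / (real (Suc window_J) * T + c - \<theta>))
      \<le> (\<Sum>j=3..window_J. recip_sq_integral l (real j * T + c))"
    if "0 \<le> \<theta>" "2 * \<theta> + l \<le> T" "\<theta> < 3 * T + c"
      "(3 * T + c) * (3 * T + c + l) \<le> (3 * T + c - \<theta>) * (3 * T + c - \<theta> + T)" for c \<theta>
  proof -
    have "recip_sq_integral l (real j * T + c) = l / ((real j * T + c) * (real j * T + c + l))"
      if "j \<in> {3..window_J}" for j
    proof (rule recip_sq_integral_eq[OF _ l])
      have "3 * T \<le> real j * T" using that T by simp
      then show "0 < real j * T + c" using \<open>0 \<le> \<theta>\<close> \<open>\<theta> < 3 * T + c\<close> by linarith
    qed
    then show ?thesis
      using lattice_tail_ge[OF T l l, of \<theta> 2 c window_J] that J by (simp add: numeral_eq_Suc)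
  qed
  have "recip_sq_integral l a + (\<Sum>j=1..window_J. recip_sq_integral l (real j * T + a)
      + recip_sq_integral l (real j * T + a')) \<le> lattice_grid_sum a m"
    using window_grid_sum_ge[of grid_h "1/10^7" a m T window_J] grid_h_pos grid_h_le a m
    unfolding lattice_grid_sum_def T_def a'_def by (simp add: algebra_simps)
  then show ?thesis
    unfolding sum_split_first_two[OF J] sum.distrib
    using tail[OF \<theta>1] tail[OF \<theta>2] by (simp add: numeral_eq_Suc)
qed

text \<open>The shifts \<open>\<theta>\<close> in the following certificates were found numerically, and the bounds
  are rounded down.\<close>

lemma sparse_block_ge: "2065604170567087/6250000000000000 \<le> sparse_block"
proof -
  have L0: "3962463/62500000 \<le> lattice_inv_sq 0"
    by (rule order_trans[OF _ lattice_inv_sq_ge[of "1647/500" 0 "1647/500"]])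
      (simp_all add: period_T_def window_J_def power2_eq_square)
  have L1: "532945023/500000000 \<le> lattice_inv_sq 1"
    by (rule order_trans[OF _ lattice_inv_sq_ge[of "1323/400" 1 "32791/10000"]])
      (simp_all add: period_T_def window_J_def power2_eq_square)
  have L2: "324368489/1000000000 \<le> lattice_inv_sq 2"
    by (rule order_trans[OF _ lattice_inv_sq_ge[of "33199/10000" 2 "32627/10000"]])
      (simp_all add: period_T_def window_J_def power2_eq_square)
  have L3: "203984879/1000000000 \<le> lattice_inv_sq 3"
    by (rule order_trans[OF _ lattice_inv_sq_ge[of "33313/10000" 3 "16223/5000"]])
      (simp_all add: period_T_def window_J_def power2_eq_square)
  have L4: "24528591/125000000 \<le> lattice_inv_sq 4"
    by (rule order_trans[OF _ lattice_inv_sq_ge[of "16709/5000" 4 "8061/2500"]])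
      (simp_all add: period_T_def window_J_def power2_eq_square)
  show ?thesis
    using L0 L1 L2 L3 L4
    by (simp add: sparse_block_def sparse_w_def eval_nat_numeral lattice_inv_sq_uminus)
qed

lemmas lattice_grid_sum_2n_ge = order_trans[OF _ lattice_grid_sum_ge[OF grid_h_multiples(1)]]
lemmas lattice_grid_sum_6n_ge = order_trans[OF _ lattice_grid_sum_ge[OF grid_h_multiples(2)]]

lemma mixed_row_0_ge:
  "9201/10000 * (36876647/500000000) + 1989/2500 * (43351109/125000000)
    + 9201/10000 * (26189277/125000000) \<le> mixed_row 0"
proof -
  have "36876647/500000000 \<le> lattice_grid_sum 5 (2 * grid_n)"
    by (rule lattice_grid_sum_2n_ge[of _ 5 "32317/10000" "7691/2500"])
      (simp_all add: period_T_def window_J_def recip_sq_integral_def)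
  moreover have "43351109/125000000 \<le> lattice_grid_sum (131/25) (6 * grid_n)"
    by (rule lattice_grid_sum_6n_ge[of _ "131/25" "14981/5000" "3527/1250"])
      (simp_all add: period_T_def window_J_def recip_sq_integral_def)
  moreover have "26189277/125000000 \<le> lattice_grid_sum (149/25) (2 * grid_n)"
    by (rule lattice_grid_sum_2n_ge[of _ "149/25" "8101/2500" "1907/625"])
      (simp_all add: period_T_def window_J_def recip_sq_integral_def)
  ultimately show ?thesis by (simp add: mixed_row_def)
qed

lemma mixed_row_1_ge:
  "9201/10000 * (24080019/500000000) + 1989/2500 * (16913041/100000000)
    + 9201/10000 * (35897557/500000000) \<le> mixed_row 1"
proof -
  have "24080019/500000000 \<le> lattice_grid_sum 4 (2 * grid_n)"
    by (rule lattice_grid_sum_2n_ge[of _ 4 "1611/500" "7749/2500"])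
      (simp_all add: period_T_def window_J_def recip_sq_integral_def)
  moreover have "16913041/100000000 \<le> lattice_grid_sum (106/25) (6 * grid_n)"
    by (rule lattice_grid_sum_6n_ge[of _ "106/25" "29867/10000" "28467/10000"])
      (simp_all add: period_T_def window_J_def recip_sq_integral_def)
  moreover have "35897557/500000000 \<le> lattice_grid_sum (124/25) (2 * grid_n)"
    by (rule lattice_grid_sum_2n_ge[of _ "124/25" "16157/5000" "15387/5000"])
      (simp_all add: period_T_def window_J_def recip_sq_integral_def)
  ultimately show ?thesis by (simp add: mixed_row_def)
qed

lemma mixed_row_2_ge:
  "9201/10000 * (47789257/1000000000) + 1989/2500 * (138159793/1000000000)
    + 9201/10000 * (9557529/200000000) \<le> mixed_row 2"
proof -
  have "47789257/1000000000 \<le> lattice_grid_sum 3 (2 * grid_n)"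
    by (rule lattice_grid_sum_2n_ge[of _ 3 "8029/2500" "7801/2500"])
      (simp_all add: period_T_def window_J_def recip_sq_integral_def)
  moreover have "138159793/1000000000 \<le> lattice_grid_sum (81/25) (6 * grid_n)"
    by (rule lattice_grid_sum_6n_ge[of _ "81/25" "5953/2000" "2869/1000"])
      (simp_all add: period_T_def window_J_def recip_sq_integral_def)
  moreover have "9557529/200000000 \<le> lattice_grid_sum (99/25) (2 * grid_n)"
    by (rule lattice_grid_sum_2n_ge[of _ "99/25" "4027/1250" "6201/2000"])
      (simp_all add: period_T_def window_J_def recip_sq_integral_def)
  ultimately show ?thesis by (simp add: mixed_row_def)
qed

lemma mixed_row_3_ge:
  "9201/10000 * (35900077/500000000) + 1989/2500 * (169141373/1000000000)
    + 9201/10000 * (12040443/250000000) \<le> mixed_row 3"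
proof -
  have "35900077/500000000 \<le> lattice_grid_sum 2 (2 * grid_n)"
    by (rule lattice_grid_sum_2n_ge[of _ 2 "16001/5000" "31389/10000"])
      (simp_all add: period_T_def window_J_def recip_sq_integral_def)
  moreover have "169141373/1000000000 \<le> lattice_grid_sum (56/25) (6 * grid_n)"
    by (rule lattice_grid_sum_6n_ge[of _ "56/25" "5931/2000" "28889/10000"])
      (simp_all add: period_T_def window_J_def recip_sq_integral_def)
  moreover have "12040443/250000000 \<le> lattice_grid_sum (74/25) (2 * grid_n)"
    by (rule lattice_grid_sum_2n_ge[of _ "74/25" "32111/10000" "31211/10000"])
      (simp_all add: period_T_def window_J_def recip_sq_integral_def)
  ultimately show ?thesis by (simp add: mixed_row_def)
qed

lemma mixed_row_4_ge:
  "9201/10000 * (13095197/62500000) + 1989/2500 * (346831683/1000000000)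
    + 9201/10000 * (18439621/250000000) \<le> mixed_row 4"
proof -
  have "13095197/62500000 \<le> lattice_grid_sum 1 (2 * grid_n)"
    by (rule lattice_grid_sum_2n_ge[of _ 1 "15939/5000" "31557/10000"])
      (simp_all add: period_T_def window_J_def recip_sq_integral_def)
  moreover have "346831683/1000000000 \<le> lattice_grid_sum (31/25) (6 * grid_n)"
    by (rule lattice_grid_sum_6n_ge[of _ "31/25" "5907/2000" "7267/2500"])
      (simp_all add: period_T_def window_J_def recip_sq_integral_def)
  moreover have "18439621/250000000 \<le> lattice_grid_sum (49/25) (2 * grid_n)"
    by (rule lattice_grid_sum_2n_ge[of _ "49/25" "31997/10000" "7849/2500"])
      (simp_all add: period_T_def window_J_def recip_sq_integral_def)
  ultimately show ?thesis by (simp add: mixed_row_def)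
qed

lemma mixed_block_ge: "2926842413872527/10000000000000000 \<le> mixed_block"
  using mixed_row_0_ge mixed_row_1_ge mixed_row_2_ge mixed_row_3_ge mixed_row_4_ge
  by (simp add: mixed_block_def sparse_w_def eval_nat_numeral)

lemma dense_block_ge:
  "(9201/10000)^2 * ((6/25 - 6/(25 * 10^7)) * (pi^2/3 - 2/10^6))
     + (1989/2500)^2 * ((18/25 - 6/(25 * 10^7)) * (pi^2/3 - 2/10^6))
     + (9201/10000)^2 * ((6/25 - 6/(25 * 10^7)) * (pi^2/3 - 2/10^6)) \<le> dense_block"
proof -
  have piece: "(real k * 3/25 - 6/(25 * 10^7)) * (pi^2/3 - 2/10^6) \<le> grid_h * inv_sq_dist_sum (k * grid_n)"
    if "1 \<le> k" for k :: nat
  proof -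
    have D: "2 * 10^6 \<le> k * grid_n" using that by (simp add: grid_n_def)
    have "pi^2/6 - 1/real (10^6 :: nat) \<le> (\<Sum>d=1..10^6. 1/(real d)^2)"
      by (rule inverse_squares_partial_sum_ge) simp
    then have "real (k * grid_n - 2 * 10^6) * (pi^2/3 - 2/10^6)
        \<le> real (k * grid_n - 2 * 10^6) * (2 * (\<Sum>d=1..10^6. 1/(real d)^2))"
      by (intro mult_left_mono) auto
    also have "\<dots> \<le> inv_sq_dist_sum (k * grid_n)"
      by (rule inv_sq_dist_sum_ge[OF D])
    finally have "grid_h * (real (k * grid_n - 2 * 10^6) * (pi^2/3 - 2/10^6)) \<le> grid_h * inv_sq_dist_sum (k * grid_n)"
      using grid_h_pos by (intro mult_left_mono) auto
    moreover have "grid_h * real (k * grid_n - 2 * 10^6) = real k * 3/25 - 6/(25 * 10^7)"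
      using D by (simp add: of_nat_diff grid_h_def grid_n_def)
    ultimately show ?thesis by (simp add: mult.assoc[symmetric])
  qed
  have two: "(6/25 - 6/(25 * 10^7)) * (pi^2/3 - 2/10^6) \<le> grid_h * inv_sq_dist_sum (2 * grid_n)"
    using piece[of 2] by simp
  have six: "(18/25 - 6/(25 * 10^7)) * (pi^2/3 - 2/10^6) \<le> grid_h * inv_sq_dist_sum (6 * grid_n)"
    using piece[of 6] by simp
  show ?thesis
    using add_mono[OF add_mono[OF mult_left_mono[OF two zero_le_power2[of "9201/10000"]]
        mult_left_mono[OF six zero_le_power2[of "1989/2500"]]] mult_left_mono[OF two zero_le_power2[of "9201/10000"]]]
    unfolding dense_block_def by (simp only: mult_ac)
qed

lemma periodic_form_config_ge:
  "35047/100000 * pi^2 * (\<Sum>r<period_M. (config_w r)^2) \<le> periodic_form (1/2) config config_w period_M window_J"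
proof -
  have "pi^2 \<le> (31415926535899/10^13)^2"
    using pi_approx(2) by (intro power_mono) auto
  also have "\<dots> \<le> 98697/10000"
    by (simp add: power2_eq_square)
  finally have pi: "pi^2 \<le> 98697/10000" .
  have closed: "(9201/10000)^2 * ((6/25 - 6/(25 * 10^7)) * (P/3 - 2/10^6))
     + (1989/2500)^2 * ((18/25 - 6/(25 * 10^7)) * (P/3 - 2/10^6))
     + (9201/10000)^2 * ((6/25 - 6/(25 * 10^7)) * (P/3 - 2/10^6))
     = 1796052933692631/6250000000000000 * P - 5388158801077893/3125000000000000000000" for P :: real
    by (simp add: power2_eq_square field_simps)
  have "1796052933692631/6250000000000000 * pi^2 - 5388158801077893/3125000000000000000000 \<le> dense_block"
    using dense_block_ge unfolding closed .
  then show ?thesis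
    using pi blocks_le_periodic_form sparse_block_ge mixed_block_ge unfolding config_w_sq_sum by linarith
qed

theorem theorem5:
  shows "Cbar (1/2) \<ge> ereal (0.35047 * pi^2)"
  unfolding Cbar_def
proof (rule Inf_greatest)
  fix x assume "x \<in> {ereal C | C. admissible_const (1/2) C}"
  then obtain C where x: "x = ereal C" and C: "admissible_const (1/2) C" by auto
  have "periodic_form (1/2) config config_w period_M window_J \<le> C * (\<Sum>r<period_M. (config_w r)^2)"
    using period_M_ge config_w_nonneg
    by (intro admissible_const_periodic[OF C strict_mono_config _ config_periodic]) auto
  then have "0.35047 * pi^2 \<le> C"
    using periodic_form_config_ge unfolding config_w_sq_sum by simp
  then show "ereal (0.35047 * pi^2) \<le> x" unfolding x by simp
qed

end
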